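(* Let $f$ satisfy the Standing Assumption below and let $E_*\in J$ with $E_*=f_-(\theta_-)=f_+(\theta_+)$, $\theta_\pm\in I_\pm$. If $\|T_f(E_* )\|_{\mathbb{T}}\ge 7\nu/d$, then $|\partial_\theta f_\pm(\theta_\pm)|\ge\nu$ for both signs.
   Context: Standing Assumption: $I_-,I_+\subset\mathbb{T}$ are closed intervals with disjoint interiors, $I=I_-\cup I_+$, $J\subset\mathbb{R}$ is a closed interval, and $f:I\to J$ is $C^2$ with $f_\pm:=f|_{I_\pm}$ satisfying $\pm\partial_\theta f_\pm\ge 0$. Moreover: (1) $d\le|\partial_\theta f|+|\partial_\theta^2 f|\le D$ on $I$ for constants $0<d\le D$; (2) $f_\pm(I_\pm)=J$; (3) there is a constant $0<\nu<d/2$ with $|\partial_\theta f|\ge\nu$ at the boundary points of $I$. By (2) and monotonicity, the inverses $f_\pm^{-1}:J\to I_\pm$ are defined, and $T_f:J\to I_+-I_-$ is $T_f(E)=f_+^{-1}(E)-f_-^{-1}(E)$. $\|x\|_{\mathbb{T}}$ denotes distance to the nearest integer. *)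

theory Defs
  imports "HOL-Analysis.Analysis"
begin

text \<open>The circle T = R/Z is handled via lifts: a subset A of R stands for its image
  in T, and circ_lift A is its full preimage in R (all integer translates).\<close>
definition circ_lift :: "real set \<Rightarrow> real set" where
  "circ_lift A = {x. \<exists>k::int. x - of_int k \<in> A}"

definition tnorm :: "real \<Rightarrow> real" where
  "tnorm x = infdist x \<int>"

text \<open>T_f(E) = f_+^{-1}(E) - f_-^{-1}(E), with I_- = [am,bm], I_+ = [ap,bp] (lifts).\<close>
definition Tf :: "(real \<Rightarrow> real) \<Rightarrow> real \<Rightarrow> real \<Rightarrow> real \<Rightarrow> real \<Rightarrow> real \<Rightarrow> real" where
  "Tf f am bm ap bp E = the_inv_into {ap..bp} f E - the_inv_into {am..bm} f E"

end

(*
  Argue by contraposition: let |f'| < nu at theta_+ (the point theta_- is handled by passing to -f,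
  and the sign f''(theta_+) < 0 by reflecting x to -x). With a = d - nu > nu, the bound on
  |f'| + |f''| gives |f''| >= a wherever |f'| <= nu, so f' crosses the band [-nu, nu] steeply and
  monotonically. Hence f' stays below f'(theta_+) < nu on [a_+, theta_+]; the endpoint a_+ is then not
  a boundary point of the lift of I, so it is glued to b_- modulo 1, say a_+ = b_- + k. Around this
  turning point f first decreases and then increases, and comparing the preimages theta_- + k and
  theta_+ of E_* (a Taylor bound where f' is in the band, slope at most -nu where it is below)
  gives |theta_+ - theta_- - k| < 7 nu / d.
*)

theory Submission
  imports Defs
begin

definition C1_on :: "(real \<Rightarrow> real) \<Rightarrow> (real \<Rightarrow> real) \<Rightarrow> real set \<Rightarrow> bool" where
  "C1_on g g' U \<longleftrightarrow>
     (\<forall>x\<in>U. (g has_real_derivative g' x) (at x within U)) \<and> continuous_on U g'"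

definition C2_on :: "(real \<Rightarrow> real) \<Rightarrow> (real \<Rightarrow> real) \<Rightarrow> (real \<Rightarrow> real) \<Rightarrow> real set \<Rightarrow> bool" where
  "C2_on f f' f'' U \<longleftrightarrow>
     (\<forall>x\<in>U. (f has_real_derivative f' x) (at x within U)) \<and> C1_on f' f'' U"

lemma continuous_on_if_has_real_derivative:
  "\<forall>x\<in>U. (g has_real_derivative g' x) (at x within U) \<Longrightarrow> continuous_on U g"
  by (meson DERIV_continuous continuous_on_eq_continuous_within)

lemma C1_on_continuous_on: "C1_on g g' U \<Longrightarrow> continuous_on U g"
  unfolding C1_on_def using continuous_on_if_has_real_derivative[of U g g'] by blast

lemma C2_on_uminus: "C2_on f f' f'' U \<Longrightarrow> C2_on (\<lambda>x. - f x) (\<lambda>x. - f' x) (\<lambda>x. - f'' x) U"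
  unfolding C2_on_def C1_on_def by (auto intro!: derivative_eq_intros continuous_intros)

lemma has_real_derivative_reflect:
  assumes "(f has_real_derivative D) (at (- x) within U)"
  shows "((\<lambda>x. f (- x)) has_real_derivative - D) (at x within uminus ` U)"
proof -
  have "((\<lambda>x. - x) has_real_derivative - 1) (at x within uminus ` U)"
    by (auto intro!: derivative_eq_intros)
  moreover have "uminus ` uminus ` U = U"
    by (simp add: image_image)
  ultimately show ?thesis
    using DERIV_image_chain[of f D "\<lambda>x. - x" x "uminus ` U" "- 1"] assms by (simp add: o_def)
qed

lemma C2_on_reflect:
  assumes "C2_on f f' f'' U"
  shows "C2_on (\<lambda>x. f (- x)) (\<lambda>x. - f' (- x)) (\<lambda>x. f'' (- x)) (uminus ` U)"
proof -
  have D1: "\<forall>x\<in>U. (f has_real_derivative f' x) (at x within U)"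
    and D2: "\<forall>x\<in>U. (f' has_real_derivative f'' x) (at x within U)"
    and cont: "continuous_on U f''"
    using assms unfolding C2_on_def C1_on_def by auto
  have "((\<lambda>x. - f' (- x)) has_real_derivative f'' (- x)) (at x within uminus ` U)"
    if "x \<in> uminus ` U" for x
    using DERIV_minus[OF has_real_derivative_reflect[of f' "f'' (- x)"]] D2 that by force
  moreover have "continuous_on (uminus ` U) (\<lambda>x. f'' (- x))"
    by (rule continuous_on_compose2[OF cont]) (auto intro!: continuous_intros)
  ultimately show ?thesis
    unfolding C2_on_def C1_on_def using has_real_derivative_reflect D1 by force
qed

lemma mvt_within:
  assumes D: "\<forall>x\<in>U. (g has_real_derivative g' x) (at x within U)"
    and "a \<le> b" "{a..b} \<subseteq> U"
  shows "\<exists>\<xi>\<in>{a..b}. g b - g a = g' \<xi> * (b - a)"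
proof -
  have "(g has_derivative (\<lambda>h. g' x * h)) (at x within {a..b})" if "a \<le> x" "x \<le> b" for x
    using D assms(3) that
    by (metis atLeastAtMost_iff has_field_derivative_imp_has_derivative
        has_field_derivative_subset subsetD)
  from mvt_very_simple[OF assms(2) this] show ?thesis
    by auto
qed

lemma diff_ge_of_deriv_ge:
  assumes "\<forall>x\<in>U. (g has_real_derivative g' x) (at x within U)" "a \<le> b" "{a..b} \<subseteq> U"
    and "\<forall>x\<in>{a..b}. k \<le> g' x"
  shows "k * (b - a) \<le> g b - g a"
proof -
  obtain \<xi> where "\<xi> \<in> {a..b}" "g b - g a = g' \<xi> * (b - a)"
    using mvt_within[OF assms(1-3)] by blast
  then show ?thesis
    using assms(2,4) by (simp add: mult_right_mono)
qed

lemma diff_le_of_deriv_le: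
  assumes "\<forall>x\<in>U. (g has_real_derivative g' x) (at x within U)" "a \<le> b" "{a..b} \<subseteq> U"
    and "\<forall>x\<in>{a..b}. g' x \<le> k"
  shows "g b - g a \<le> k * (b - a)"
proof -
  obtain \<xi> where "\<xi> \<in> {a..b}" "g b - g a = g' \<xi> * (b - a)"
    using mvt_within[OF assms(1-3)] by blast
  then show ?thesis
    using assms(2,4) by (simp add: mult_right_mono)
qed

lemma has_real_derivative_at_interior:
  assumes "(f has_real_derivative D) (at x within U)" "{l..r} \<subseteq> U" "l < x" "x < r"
  shows "(f has_real_derivative D) (at x)"
  using has_field_derivative_subset[OF assms(1,2)] at_within_Icc_at[OF assms(3,4)] by simp

lemma at_within_Icc_nontrivial:
  "(a :: real) < b \<Longrightarrow> x \<in> {a..b} \<Longrightarrow> at x within {a..b} \<noteq> bot"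
  using trivial_limit_within[of x "{a..b}"] islimpt_Icc[of a b x] by (simp add: trivial_limit_def)

lemma deriv_zero_at_interior_max:
  assumes D: "\<forall>x\<in>U. (g has_real_derivative g' x) (at x within U)" and sub: "{l..r} \<subseteq> U"
    and z: "z \<in> {l..r}" "g l < g z" "g r < g z"
  shows "\<exists>\<xi>\<in>{l<..<r}. g' \<xi> = 0 \<and> g z \<le> g \<xi>"
proof -
  have "continuous_on {l..r} g"
    using continuous_on_if_has_real_derivative[OF D] sub by (rule continuous_on_subset)
  then obtain \<xi> where \<xi>: "\<xi> \<in> {l..r}" "\<forall>x\<in>{l..r}. g x \<le> g \<xi>"
    using continuous_attains_sup[of "{l..r}" g] z by auto
  have lr: "l < \<xi>" "\<xi> < r"
    using \<xi> z by (metis atLeastAtMost_iff le_less not_le)+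
  have "(g has_real_derivative g' \<xi>) (at \<xi>)"
    using has_real_derivative_at_interior[OF _ sub lr] D sub \<xi>(1) by blast
  moreover have "\<forall>y. \<bar>\<xi> - y\<bar> < min (\<xi> - l) (r - \<xi>) \<longrightarrow> g y \<le> g \<xi>"
    using \<xi>(2) by (force simp: abs_less_iff)
  ultimately have "g' \<xi> = 0"
    using DERIV_local_max[of g "g' \<xi>" \<xi> "min (\<xi> - l) (r - \<xi>)"] lr by simp
  then show ?thesis
    using \<xi> z lr by auto
qed

lemma deriv_zero_at_interior_min:
  assumes D: "\<forall>x\<in>U. (g has_real_derivative g' x) (at x within U)" and sub: "{l..r} \<subseteq> U"
    and z: "z \<in> {l..r}" "g z < g l" "g z < g r"
  shows "\<exists>\<xi>\<in>{l<..<r}. g' \<xi> = 0 \<and> g \<xi> \<le> g z"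
  using deriv_zero_at_interior_max[of U "\<lambda>x. - g x" "\<lambda>x. - g' x" l r z] D sub z
  by (auto intro: DERIV_minus)

lemma steep_in_band:
  assumes C: "C1_on g g' U" and sub: "{l..r} \<subseteq> U"
    and small: "\<forall>x\<in>{l..r}. \<bar>g x\<bar> \<le> \<nu>"
    and band: "\<forall>x\<in>U. \<bar>g x\<bar> \<le> \<nu> \<longrightarrow> a \<le> \<bar>g' x\<bar>" and a: "0 < a"
  shows "(\<forall>x\<in>{l..r}. a \<le> g' x) \<or> (\<forall>x\<in>{l..r}. g' x \<le> - a)"
proof (rule ccontr)
  have steep: "a \<le> \<bar>g' z\<bar>" if "z \<in> {l..r}" for z
    using band small sub that by blast
  assume "\<not> ?thesis"
  then obtain x y where xy: "x \<in> {l..r}" "y \<in> {l..r}" "g' x < a" "- a < g' y"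
    by force
  then have signs: "g' x < 0" "0 < g' y"
    using steep[of x] steep[of y] a by auto
  have "continuous_on {l..r} g'"
    using C sub unfolding C1_on_def by (meson continuous_on_subset)
  then have "connected (g' ` {l..r})"
    by (rule connected_continuous_image) simp
  then have "{g' x..g' y} \<subseteq> g' ` {l..r}"
    using connected_contains_Icc xy by blast
  then obtain z where "z \<in> {l..r}" "g' z = 0"
    using signs by (metis atLeastAtMost_iff imageE less_eq_real_def subsetD)
  then show False
    using steep a by fastforce
qed

lemma band_stays_below:
  assumes D: "\<forall>x\<in>U. (g has_real_derivative g' x) (at x within U)" and sub: "{l..r} \<subseteq> U"
    and nonpos: "\<forall>x\<in>{l..r}. g x \<le> 0" and ends: "g l \<le> - \<nu>" "g r \<le> - \<nu>"
    and band: "\<forall>x\<in>U. \<bar>g x\<bar> \<le> \<nu> \<longrightarrow> a \<le> \<bar>g' x\<bar>" and a: "0 < a"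
  shows "\<forall>x\<in>{l..r}. g x \<le> - \<nu>"
proof (rule ccontr)
  assume "\<not> ?thesis"
  then obtain z where z: "z \<in> {l..r}" "- \<nu> < g z"
    by force
  then obtain \<xi> where \<xi>: "\<xi> \<in> {l<..<r}" "g' \<xi> = 0" "g z \<le> g \<xi>"
    using deriv_zero_at_interior_max[OF D sub z(1)] ends by fastforce
  moreover have "\<xi> \<in> U"
    using \<xi>(1) sub by auto
  moreover have "\<bar>g \<xi>\<bar> \<le> \<nu>"
    using \<xi> z nonpos by fastforce
  ultimately show False
    using band a by fastforce
qed

lemma band_rising_left:
  assumes C: "C1_on g g' U" and sub: "{q..\<theta>} \<subseteq> U" and q: "q \<le> \<theta>"
    and nonneg: "\<forall>x\<in>{q..\<theta>}. 0 \<le> g x" and crit: "g \<theta> < \<nu>" "0 < g' \<theta>"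
    and band: "\<forall>x\<in>U. \<bar>g x\<bar> \<le> \<nu> \<longrightarrow> a \<le> \<bar>g' x\<bar>" and a: "0 < a"
  shows "\<forall>x\<in>{q..\<theta>}. g x \<le> g \<theta> \<and> a \<le> g' x"
proof -
  have D: "\<forall>x\<in>U. (g has_real_derivative g' x) (at x within U)"
    using C by (simp add: C1_on_def)
  have below: "g x \<le> g \<theta>" if x: "x \<in> {q..\<theta>}" for x
  proof (rule ccontr)
    assume "\<not> g x \<le> g \<theta>"
    then have x\<theta>: "x < \<theta>" "g \<theta> < g x"
      using x by (auto simp: le_less)
    have "\<theta> \<in> U"
      using sub q by auto
    then obtain \<delta> where \<delta>: "\<delta> > 0" "\<forall>h>0. \<theta> - h \<in> U \<longrightarrow> h < \<delta> \<longrightarrow> g (\<theta> - h) < g \<theta>"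
      using has_real_derivative_pos_inc_left[OF D[rule_format] crit(2)] by auto
    define y where "y = max x (\<theta> - \<delta> / 2)"
    have h: "\<theta> - y > 0" "\<theta> - (\<theta> - y) \<in> U" "\<theta> - y < \<delta>"
      using x x\<theta> \<delta> sub by (auto simp: y_def)
    have y: "y \<in> {x..\<theta>}" "g y < g \<theta>"
      using x\<theta> \<delta>(1) \<delta>(2)[rule_format, OF h] by (auto simp: y_def)
    obtain \<xi> where \<xi>: "\<xi> \<in> {x<..<\<theta>}" "g' \<xi> = 0" "g \<xi> \<le> g y"
      using deriv_zero_at_interior_min[OF D _ y(1)] sub x y(2) x\<theta>(2) by fastforce
    moreover have "\<xi> \<in> U"
      using \<xi>(1) sub x by auto
    moreover have "\<bar>g \<xi>\<bar> \<le> \<nu>"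
      using \<xi> nonneg x y crit by fastforce
    ultimately show False
      using band a by fastforce
  qed
  have "(\<forall>x\<in>{q..\<theta>}. a \<le> g' x) \<or> (\<forall>x\<in>{q..\<theta>}. g' x \<le> - a)"
    by (rule steep_in_band[OF C sub _ band a]) (use below nonneg crit in fastforce)
  moreover have "\<theta> \<in> {q..\<theta>}" "\<not> g' \<theta> \<le> - a"
    using q crit(2) a by auto
  ultimately have "\<forall>x\<in>{q..\<theta>}. a \<le> g' x"
    by blast
  with below show ?thesis
    by blast
qed

lemma taylor_lower_bound_left:
  assumes C: "C2_on f f' f'' U" and sub: "{y..p} \<subseteq> U" and y: "y \<le> p"
    and crit: "f' p = 0" and convex: "\<forall>x\<in>{y..p}. k \<le> f'' x"
  shows "f p + k * (p - y)\<^sup>2 / 2 \<le> f y"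
proof -
  have D1: "\<forall>x\<in>U. (f has_real_derivative f' x) (at x within U)"
    and D2: "\<forall>x\<in>U. (f' has_real_derivative f'' x) (at x within U)"
    using C by (auto simp: C2_on_def C1_on_def)
  define h where "h x = f' x + k * (p - x)" for x
  define G where "G x = f x - k * (p - x)\<^sup>2 / 2" for x
  have Dh: "\<forall>x\<in>U. (h has_real_derivative f'' x - k) (at x within U)"
    unfolding h_def using D2 by (auto intro!: derivative_eq_intros)
  have DG: "\<forall>x\<in>U. (G has_real_derivative h x) (at x within U)"
    unfolding G_def h_def using D1 by (auto intro!: derivative_eq_intros simp: field_simps)
  have "h x \<le> 0" if "x \<in> {y..p}" for x
  proof -
    have "0 * (p - x) \<le> h p - h x"
      by (rule diff_ge_of_deriv_ge[OF Dh]) (use that sub convex in auto)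
    then show ?thesis
      using crit by (simp add: h_def)
  qed
  then have "G p - G y \<le> 0 * (p - y)"
    by (intro diff_le_of_deriv_le[OF DG y sub]) auto
  then show ?thesis
    by (simp add: G_def)
qed

lemma steep_descent_entry:
  assumes C: "C1_on g g' U" and sub: "{l..w} \<subseteq> U" and lw: "l \<le> w"
    and nonpos: "\<forall>x\<in>{l..w}. g x \<le> 0" and above: "\<forall>x\<in>{l..<w}. - \<nu> < g x"
    and entry: "g w \<le> - \<nu>" and nu: "0 \<le> \<nu>"
    and band: "\<forall>x\<in>U. \<bar>g x\<bar> \<le> \<nu> \<longrightarrow> a \<le> \<bar>g' x\<bar>" and a: "0 < a"
  shows "a * (w - l) \<le> \<nu>"
proof (cases "l = w")
  case True
  then show ?thesis
    using nu by simp
next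
  case False
  then have lw': "l < w"
    using lw by simp
  have D: "\<forall>x\<in>U. (g has_real_derivative g' x) (at x within U)"
    using C by (simp add: C1_on_def)
  have "continuous_on (closure {l..<w}) g"
    using C1_on_continuous_on[OF C] sub lw' by (simp add: continuous_on_subset)
  then have "- \<nu> \<le> g w"
    by (rule continuous_ge_on_closure) (use lw' above in \<open>auto simp: less_imp_le\<close>)
  then have "\<forall>x\<in>{l..w}. \<bar>g x\<bar> \<le> \<nu>"
    using above nonpos by (metis abs_of_nonpos atLeastAtMost_iff atLeastLessThan_iff
        le_less minus_le_iff)
  then have "(\<forall>x\<in>{l..w}. a \<le> g' x) \<or> (\<forall>x\<in>{l..w}. g' x \<le> - a)"
    by (rule steep_in_band[OF C sub _ band a])
  then show ?thesis
  proof
    assume "\<forall>x\<in>{l..w}. a \<le> g' x"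
    then have "a * (w - l) \<le> g w - g l"
      by (rule diff_ge_of_deriv_ge[OF D lw sub])
    moreover have "- \<nu> < g l"
      using above lw' by simp
    ultimately show ?thesis
      using entry a lw' by (smt (verit) mult_pos_pos)
  next
    assume "\<forall>x\<in>{l..w}. g' x \<le> - a"
    then have "g w - g l \<le> - a * (w - l)"
      by (rule diff_le_of_deriv_le[OF D lw sub])
    moreover have "g l \<le> 0"
      using nonpos lw by simp
    ultimately show ?thesis
      using \<open>- \<nu> \<le> g w\<close> by linarith
  qed
qed

lemma band_exit_convex:
  assumes C: "C1_on g g' U" and sub: "{y..p} \<subseteq> U" and yp: "y \<le> p"
    and nonpos: "\<forall>x\<in>{y..p}. g x \<le> 0" and above: "\<forall>x\<in>{y<..p}. - \<nu> < g x"
    and exit: "- \<nu> < g p" "0 < g' p"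
    and band: "\<forall>x\<in>U. \<bar>g x\<bar> \<le> \<nu> \<longrightarrow> a \<le> \<bar>g' x\<bar>" and a: "0 < a"
  shows "\<forall>x\<in>{y..p}. a \<le> g' x"
proof -
  have "- \<nu> \<le> g y"
  proof (cases "y = p")
    case True
    then show ?thesis
      using exit by simp
  next
    case False
    then have "continuous_on (closure {y<..p}) g"
      using C1_on_continuous_on[OF C] sub yp by (simp add: continuous_on_subset)
    then show ?thesis
      by (rule continuous_ge_on_closure) (use False yp above in \<open>auto simp: less_imp_le\<close>)
  qed
  then have "\<forall>x\<in>{y..p}. \<bar>g x\<bar> \<le> \<nu>"
    using above nonpos by (metis abs_of_nonpos atLeastAtMost_iff greaterThanAtMost_iff
        le_less minus_le_iff)
  then have "(\<forall>x\<in>{y..p}. a \<le> g' x) \<or> (\<forall>x\<in>{y..p}. g' x \<le> - a)"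
    by (rule steep_in_band[OF C sub _ band a])
  moreover have "p \<in> {y..p}" "\<not> g' p \<le> - a"
    using yp exit a by auto
  ultimately show ?thesis
    by blast
qed

lemma first_and_last_below:
  fixes g :: "real \<Rightarrow> real"
  assumes cont: "continuous_on {l..r} g" and x: "x \<in> {l..r}" "g x \<le> c"
  obtains w y where "l \<le> w" "w \<le> y" "y \<le> r" "g w \<le> c" "g y \<le> c"
    "\<forall>x\<in>{l..<w}. c < g x" "\<forall>x\<in>{y<..r}. c < g x"
proof -
  define Z where "Z = {l..r} \<inter> g -` {..c}"
  have Z: "Z \<noteq> {}" "closed Z" "bdd_below Z" "bdd_above Z"
    unfolding Z_def using x continuous_closed_preimage[OF cont] by auto
  have "Inf Z \<in> Z" "Sup Z \<in> Z"
    using closed_contains_Inf closed_contains_Sup Z by auto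
  moreover have "Inf Z \<le> Sup Z"
    using Z by (intro cInf_le_cSup)
  moreover have "c < g x" if "x \<in> {l..<Inf Z}" for x
  proof -
    have "x \<notin> Z"
      using cInf_lower[OF _ Z(3)] that by force
    then show ?thesis
      using that \<open>Inf Z \<in> Z\<close> by (auto simp: Z_def)
  qed
  moreover have "c < g x" if "x \<in> {Sup Z<..r}" for x
  proof -
    have "x \<notin> Z"
      using cSup_upper[OF _ Z(4)] that by force
    then show ?thesis
      using that \<open>Sup Z \<in> Z\<close> by (auto simp: Z_def)
  qed
  ultimately show ?thesis
    using that[of "Inf Z" "Sup Z"] by (auto simp: Z_def)
qed

text \<open>The witnesses w and y are the first and the last point where f' drops to -\<nu>
  (both equal to \<theta>' if it never does).\<close>

lemma turning_point_decomposition: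
  assumes C: "C2_on f f' f'' U" and sub: "{\<theta>'..p} \<subseteq> U" and \<theta>': "\<theta>' \<le> p"
    and decr: "\<forall>x\<in>{\<theta>'..p}. f' x \<le> 0" and turn: "f' p = 0" "0 < f'' p"
    and band: "\<forall>x\<in>U. \<bar>f' x\<bar> \<le> \<nu> \<longrightarrow> a \<le> \<bar>f'' x\<bar>" and a: "0 < a" and nu: "0 < \<nu>"
  shows "\<exists>w y. \<theta>' \<le> w \<and> w \<le> y \<and> y \<le> p \<and> a * (w - \<theta>') \<le> \<nu> \<and> f w \<le> f \<theta>' \<and>
    \<nu> * (y - w) \<le> f w - f y \<and> (\<forall>x\<in>{y..p}. a \<le> f'' x)"
proof -
  have D1: "\<forall>x\<in>U. (f has_real_derivative f' x) (at x within U)" and C1: "C1_on f' f'' U"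
    using C by (auto simp: C2_on_def)
  have D2: "\<forall>x\<in>U. (f' has_real_derivative f'' x) (at x within U)"
    using C1 by (simp add: C1_on_def)
  show ?thesis
  proof (cases "\<forall>x\<in>{\<theta>'..p}. - \<nu> < f' x")
    case True
    then have "\<forall>x\<in>{\<theta>'..p}. a \<le> f'' x"
      by (intro band_exit_convex[OF C1 sub \<theta>' decr _ _ turn(2) band a]) (use turn nu in auto)
    then show ?thesis
      using \<theta>' nu by (intro exI[of _ \<theta>']) auto
  next
    case False
    then obtain x where "x \<in> {\<theta>'..p}" "f' x \<le> - \<nu>"
      by force
    moreover have "continuous_on {\<theta>'..p} f'"
      using C1_on_continuous_on[OF C1] sub by (rule continuous_on_subset)
    ultimately obtain w y where wy: "\<theta>' \<le> w" "w \<le> y" "y \<le> p" "f' w \<le> - \<nu>" "f' y \<le> - \<nu>"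
        and left: "\<forall>x\<in>{\<theta>'..<w}. - \<nu> < f' x" and right: "\<forall>x\<in>{y<..p}. - \<nu> < f' x"
      using first_and_last_below by metis
    have subs: "{\<theta>'..w} \<subseteq> U" "{w..y} \<subseteq> U" "{y..p} \<subseteq> U"
      using sub wy by auto
    have "a * (w - \<theta>') \<le> \<nu>"
      by (rule steep_descent_entry[OF C1 subs(1) wy(1) _ left wy(4) _ band a])
        (use wy decr nu in auto)
    moreover have "f w - f \<theta>' \<le> 0 * (w - \<theta>')"
      by (rule diff_le_of_deriv_le[OF D1 wy(1) subs(1)]) (use wy decr in auto)
    moreover have "\<forall>x\<in>{w..y}. f' x \<le> - \<nu>"
      by (rule band_stays_below[OF D2 subs(2) _ wy(4,5) band a]) (use wy decr in auto)
    then have "f y - f w \<le> - \<nu> * (y - w)"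
      by (rule diff_le_of_deriv_le[OF D1 wy(2) subs(2)])
    moreover have "\<forall>x\<in>{y..p}. a \<le> f'' x"
      by (rule band_exit_convex[OF C1 subs(3) wy(3) _ right _ turn(2) band a])
        (use wy decr turn nu in auto)
    ultimately show ?thesis
      using wy by (intro exI[of _ w] exI[of _ y]) auto
  qed
qed

lemma turning_point_arith:
  fixes a \<nu> t u s r :: real
  assumes "0 < \<nu>" "0 < a" "a * t < \<nu>" "\<nu> * s \<le> \<nu> * t - a * u\<^sup>2 / 2" "a * r \<le> \<nu>"
  shows "a * (t + u + s + r) < 7 / 2 * \<nu>"
proof -
  have "\<nu> * (a * s) \<le> \<nu> * (a * t) - (a * u)\<^sup>2 / 2"
    using mult_left_mono[OF assms(4), of a] assms(2) by (simp add: algebra_simps power2_eq_square)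
  moreover have "\<nu> * (a * u) - \<nu>\<^sup>2 / 2 \<le> (a * u)\<^sup>2 / 2"
    using zero_le_power2[of "a * u - \<nu>"] by (simp add: power2_eq_square algebra_simps)
  ultimately have "\<nu> * (a * s) \<le> \<nu> * (a * t - a * u + \<nu> / 2)"
    by (simp add: algebra_simps power2_eq_square)
  then have "a * s \<le> a * t - a * u + \<nu> / 2"
    using assms(1) by simp
  then show ?thesis
    using assms(3,5) by (simp add: algebra_simps)
qed

lemma turning_point_distance:
  assumes C: "C2_on f f' f'' U" and sub: "{\<theta>'..\<theta>} \<subseteq> U" and ord: "\<theta>' \<le> p" "p \<le> \<theta>"
    and decr: "\<forall>x\<in>{\<theta>'..p}. f' x \<le> 0" and incr: "\<forall>x\<in>{p..\<theta>}. 0 \<le> f' x"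
    and bound: "\<forall>x\<in>U. d \<le> \<bar>f' x\<bar> + \<bar>f'' x\<bar>"
    and crit: "f' \<theta> < \<nu>" "0 < f'' \<theta>" and nu: "0 < \<nu>" "\<nu> < d / 2"
    and level: "f \<theta>' = f \<theta>"
  shows "\<theta> - \<theta>' < 7 * \<nu> / d"
proof -
  define a where "a = d - \<nu>"
  have a: "0 < a" "d < 2 * a"
    using nu by (auto simp: a_def)
  have band: "\<forall>x\<in>U. \<bar>f' x\<bar> \<le> \<nu> \<longrightarrow> a \<le> \<bar>f'' x\<bar>"
    using bound by (force simp: a_def)
  have D1: "\<forall>x\<in>U. (f has_real_derivative f' x) (at x within U)" and C1: "C1_on f' f'' U"
    using C by (auto simp: C2_on_def)
  have D2: "\<forall>x\<in>U. (f' has_real_derivative f'' x) (at x within U)"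
    using C1 by (simp add: C1_on_def)
  have subl: "{\<theta>'..p} \<subseteq> U" and subr: "{p..\<theta>} \<subseteq> U"
    using sub ord by auto
  have right: "\<forall>x\<in>{p..\<theta>}. f' x \<le> f' \<theta> \<and> a \<le> f'' x"
    by (rule band_rising_left[OF C1 subr ord(2) incr crit band a(1)])
  have turn: "f' p = 0" "0 < f'' p"
    using decr incr right ord a by force+
  have "a * (\<theta> - p) \<le> f' \<theta> - f' p"
    by (rule diff_ge_of_deriv_ge[OF D2 ord(2) subr]) (use right in blast)
  then have slope: "a * (\<theta> - p) < \<nu>"
    using crit turn by simp
  have "f \<theta> - f p \<le> \<nu> * (\<theta> - p)"
    by (rule diff_le_of_deriv_le[OF D1 ord(2) subr]) (use right crit in force)
  obtain w y where wy: "\<theta>' \<le> w" "w \<le> y" "y \<le> p" "a * (w - \<theta>') \<le> \<nu>" "f w \<le> f \<theta>'"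
      "\<nu> * (y - w) \<le> f w - f y" "\<forall>x\<in>{y..p}. a \<le> f'' x"
    using turning_point_decomposition[OF C subl ord(1) decr turn band a(1) nu(1)] by blast
  have "f p + a * (p - y)\<^sup>2 / 2 \<le> f y"
    by (rule taylor_lower_bound_left[OF C _ wy(3) turn(1) wy(7)]) (use subl wy in auto)
  then have "\<nu> * (y - w) \<le> \<nu> * (\<theta> - p) - a * (p - y)\<^sup>2 / 2"
    using wy level \<open>f \<theta> - f p \<le> \<nu> * (\<theta> - p)\<close> by linarith
  then have "a * ((\<theta> - p) + (p - y) + (y - w) + (w - \<theta>')) < 7 / 2 * \<nu>"
    by (rule turning_point_arith[OF nu(1) a(1) slope _ wy(4)])
  moreover have "d * (\<theta> - \<theta>') \<le> 2 * a * (\<theta> - \<theta>')"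
    using a wy ord by (intro mult_right_mono) auto
  ultimately have "d * (\<theta> - \<theta>') < 7 * \<nu>"
    by simp
  then show ?thesis
    using a nu by (simp add: field_simps)
qed

lemma pos_at_interior_if_nonneg:
  assumes D: "\<forall>x\<in>U. (g has_real_derivative g' x) (at x within U)" and sub: "{l..r} \<subseteq> U"
    and nonneg: "\<forall>x\<in>{l..r}. 0 \<le> g x" and nondeg: "\<forall>x\<in>U. 0 < \<bar>g x\<bar> + \<bar>g' x\<bar>"
    and z: "l < z" "z < r"
  shows "0 < g z"
proof (rule ccontr)
  have zU: "z \<in> U"
    using sub z by auto
  assume "\<not> 0 < g z"
  moreover have "0 \<le> g z"
    using nonneg z by simp
  ultimately have zero: "g z = 0"
    by simp
  have "\<forall>y. \<bar>z - y\<bar> < min (z - l) (r - z) \<longrightarrow> g z \<le> g y"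
  proof (intro allI impI)
    fix y assume "\<bar>z - y\<bar> < min (z - l) (r - z)"
    then have "y \<in> {l..r}"
      by (simp add: abs_less_iff)
    then show "g z \<le> g y"
      using nonneg zero by simp
  qed
  moreover have "(g has_real_derivative g' z) (at z)"
    using has_real_derivative_at_interior[OF D[rule_format, OF zU] sub z] .
  ultimately have "g' z = 0"
    using DERIV_local_min[of g "g' z" z "min (z - l) (r - z)"] z by simp
  then show False
    using nondeg zU zero by force
qed

lemma strict_mono_on_if_deriv_nonneg:
  assumes C: "C2_on f f' f'' U" and sub: "{l..r} \<subseteq> U"
    and nonneg: "\<forall>x\<in>{l..r}. 0 \<le> f' x" and nondeg: "\<forall>x\<in>U. 0 < \<bar>f' x\<bar> + \<bar>f'' x\<bar>"
  shows "strict_mono_on {l..r} f"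
proof (rule strict_mono_onI)
  have D1: "\<forall>x\<in>U. (f has_real_derivative f' x) (at x within U)"
    and D2: "\<forall>x\<in>U. (f' has_real_derivative f'' x) (at x within U)"
    using C by (auto simp: C2_on_def C1_on_def)
  fix x y assume xy: "x \<in> {l..r}" "y \<in> {l..r}" "x < y"
  show "f x < f y"
  proof (rule DERIV_pos_imp_increasing_open[OF xy(3)])
    fix z assume z: "x < z" "z < y"
    then have "l < z" "z < r" "z \<in> U"
      using xy sub by auto
    then show "\<exists>D. (f has_real_derivative D) (at z) \<and> 0 < D"
      using has_real_derivative_at_interior[OF D1[rule_format] sub]
        pos_at_interior_if_nonneg[OF D2 sub nonneg nondeg] by blast
  next
    show "continuous_on {x..y} f"
      using continuous_on_if_has_real_derivative[OF D1] sub xy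
      by (meson atLeastAtMost_iff atLeastatMost_subset_iff continuous_on_subset order_trans)
  qed
qed

lemma inj_on_if_deriv_sign:
  assumes C: "C2_on f f' f'' U" and sub: "{l..r} \<subseteq> U"
    and sign: "(\<forall>x\<in>{l..r}. 0 \<le> f' x) \<or> (\<forall>x\<in>{l..r}. f' x \<le> 0)"
    and nondeg: "\<forall>x\<in>U. 0 < \<bar>f' x\<bar> + \<bar>f'' x\<bar>"
  shows "inj_on f {l..r}"
  using sign
proof
  assume "\<forall>x\<in>{l..r}. 0 \<le> f' x"
  then show ?thesis
    using strict_mono_on_if_deriv_nonneg[OF C sub _ nondeg] strict_mono_on_imp_inj_on by blast
next
  assume "\<forall>x\<in>{l..r}. f' x \<le> 0"
  then have "inj_on (\<lambda>x. - f x) {l..r}"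
    using strict_mono_on_if_deriv_nonneg[OF C2_on_uminus[OF C] sub] nondeg
    by (auto intro: strict_mono_on_imp_inj_on)
  then show ?thesis
    by (auto simp: inj_on_def)
qed

lemma periodic_of_int:
  assumes per: "\<forall>x. f (x + 1) = f (x :: real)"
  shows "f (x + of_int k) = f x"
proof (induction k rule: int_induct[where k = 0])
  case (step1 i)
  have "f (x + of_int (i + 1)) = f ((x + of_int i) + 1)"
    by (simp add: algebra_simps)
  then show ?case
    using per step1 by simp
next
  case (step2 i)
  have "f (x + of_int (i - 1)) = f (x + of_int (i - 1) + 1)"
    using per by metis
  also have "x + of_int (i - 1) + 1 = x + of_int i"
    by simp
  finally show ?case
    using step2 by simp
qed simp

lemma translate_subset_circ_lift:
  assumes "{a..b} \<subseteq> A"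
  shows "{a + of_int k..b + of_int k} \<subseteq> circ_lift A"
proof
  fix x assume "x \<in> {a + of_int k..b + of_int k}"
  then have "x - of_int k \<in> A"
    using assms by auto
  then show "x \<in> circ_lift A"
    unfolding circ_lift_def by blast
qed

lemma circ_lift_uminus: "circ_lift (uminus ` A) = uminus ` circ_lift A"
proof (rule set_eqI)
  fix x :: real
  have "(\<exists>k::int. x - of_int k \<in> uminus ` A) \<longleftrightarrow> (\<exists>k::int. - x - of_int k \<in> A)"
  proof
    assume "\<exists>k::int. x - of_int k \<in> uminus ` A"
    then obtain k :: int where "x - of_int k \<in> uminus ` A" ..
    then have "- (x - of_int k) \<in> A"
      by (metis imageE minus_minus)
    then have "- x - of_int (- k) \<in> A"
      by simp
    then show "\<exists>k::int. - x - of_int k \<in> A" ..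
  next
    assume "\<exists>k::int. - x - of_int k \<in> A"
    then obtain k :: int where k: "- x - of_int k \<in> A" ..
    have "x - of_int (- k) = - (- x - of_int k)"
      by simp
    then have "x - of_int (- k) \<in> uminus ` A"
      using k by (simp only: image_eqI)
    then show "\<exists>k::int. x - of_int k \<in> uminus ` A" ..
  qed
  moreover have "x \<in> uminus ` circ_lift A \<longleftrightarrow> - x \<in> circ_lift A"
    using image_eqI[of x uminus "- x"] by auto
  ultimately show "x \<in> circ_lift (uminus ` A) \<longleftrightarrow> x \<in> uminus ` circ_lift A"
    unfolding circ_lift_def by simp
qed

lemma countable_circ_lift:
  assumes "countable A"
  shows "countable (circ_lift A)"
proof -
  have "circ_lift A \<subseteq> (\<Union>k::int. (\<lambda>x. x + of_int k) ` A)"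
  proof
    fix x assume "x \<in> circ_lift A"
    then obtain k :: int where "x - of_int k \<in> A"
      unfolding circ_lift_def by blast
    then have "x \<in> (\<lambda>x. x + of_int k) ` A"
      using image_eqI[of x "\<lambda>x. x + of_int k" "x - of_int k"] by simp
    then show "x \<in> (\<Union>k::int. (\<lambda>x. x + of_int k) ` A)"
      by blast
  qed
  moreover have "countable (\<Union>k::int. (\<lambda>x. x + of_int k) ` A)"
    using assms by simp
  ultimately show ?thesis
    by (rule countable_subset)
qed

lemma interior_countable_real:
  assumes "countable (S :: real set)"
  shows "interior S = {}"
proof (rule equals0I)
  fix x assume "x \<in> interior S"
  then obtain e where "0 < e" "ball x e \<subseteq> S"
    by (meson mem_interior)
  then show False
    using uncountable_ball countable_subset assms by blast
qed

lemma frontier_uminus: "frontier (uminus ` S) = uminus ` frontier (S :: real set)"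
proof -
  have "closure (uminus ` S) = uminus ` closure S"
    using closure_injective_linear_image[of uminus S] by (simp add: linear_uminus)
  then show ?thesis
    unfolding frontier_def interior_negations by (simp add: image_set_diff)
qed

lemma interior_point_adjacent:
  fixes a1 b1 a2 b2 :: real
  assumes "a2 < b2" "b2 - a2 < 1"
    and disj: "\<forall>x\<in>{a1<..<b1}. \<forall>y\<in>{a2<..<b2}. x - y \<notin> \<int>"
    and int: "a2 \<in> interior (circ_lift ({a1..b1} \<union> {a2..b2}))"
  shows "\<exists>k::int. a2 = b1 + of_int k"
proof -
  obtain \<delta> where \<delta>: "\<delta> > 0" "ball a2 \<delta> \<subseteq> circ_lift ({a1..b1} \<union> {a2..b2})"
    using int mem_interior by blast
  define k0 where "k0 = \<lceil>a2 - b1\<rceil>"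
  have k0: "a2 \<le> b1 + of_int k0" "b1 + of_int k0 - 1 < a2"
    unfolding k0_def by linarith+
  define \<epsilon> where "\<epsilon> = min \<delta> (min (1 - (b2 - a2)) (a2 - (b1 + of_int k0 - 1))) / 2"
  have \<epsilon>: "0 < \<epsilon>" "\<epsilon> < \<delta>" "\<epsilon> < 1 - (b2 - a2)" "\<epsilon> < a2 - (b1 + of_int k0 - 1)"
    using \<delta> k0 assms unfolding \<epsilon>_def by auto
  define x where "x = a2 - \<epsilon>"
  have "x \<in> ball a2 \<delta>"
    using \<epsilon> by (simp add: x_def dist_real_def)
  then obtain k :: int where k: "x - of_int k \<in> {a1..b1} \<union> {a2..b2}"
    using \<delta> unfolding circ_lift_def by blast
  have "x - of_int k \<notin> {a2..b2}"
  proof (cases "0 \<le> k")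
    case True
    then show ?thesis
      using \<epsilon> by (simp add: x_def)
  next
    case False
    then have "of_int k \<le> (- 1 :: real)"
      by linarith
    then show ?thesis
      using \<epsilon> by (simp add: x_def)
  qed
  then have in1: "x - of_int k \<in> {a1..b1}"
    using k by blast
  have "\<not> k \<le> k0 - 1"
  proof
    assume "k \<le> k0 - 1"
    then have "of_int k \<le> (of_int k0 - 1 :: real)"
      by linarith
    then show False
      using in1 \<epsilon> by (simp add: x_def)
  qed
  then have "a2 \<le> b1 + of_int k"
    using k0 by linarith
  moreover have "\<not> a2 < b1 + of_int k"
  proof
    assume lt: "a2 < b1 + of_int k"
    define y where "y = (a2 + min (b1 + of_int k) b2) / 2"
    have "a2 < y" "y < b1 + of_int k" "y < b2"
      using lt assms(1) by (auto simp: y_def)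
    then have "y \<in> {a2<..<b2}" "y - of_int k \<in> {a1<..<b1}"
      using in1 \<epsilon> by (auto simp: x_def)
    moreover have "(y - of_int k) - y \<in> \<int>"
      by simp
    ultimately show False
      using disj by blast
  qed
  ultimately show ?thesis
    by auto
qed

lemma degenerate_iff_of_inj_on:
  fixes g :: "real \<Rightarrow> real"
  assumes inj: "inj_on g {a..b}" and ab: "a \<le> b" and onto: "g ` {a..b} = {c..e}" and ce: "c \<le> e"
  shows "a = b \<longleftrightarrow> c = e"
proof
  assume "a = b"
  then have "{c..e} = {g a}"
    using onto by simp
  then show "c = e"
    using ce by (metis atLeastAtMost_singleton_iff)
next
  assume "c = e"
  then have "g a = g b"
    using onto ab by (metis atLeastAtMost_iff atLeastAtMost_singleton image_eqI order_refl singletonD)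
  then show "a = b"
    using inj ab by (auto dest: inj_onD)
qed

lemma length_lt_one_if_inj_on_periodic:
  fixes g :: "real \<Rightarrow> real"
  assumes inj: "inj_on g {a..b}" and len: "b - a \<le> 1" and per: "\<forall>x. g (x + 1) = g x"
    and ab: "a \<le> b"
  shows "b - a < 1"
proof (rule ccontr)
  assume "\<not> b - a < 1"
  then have "b = a + 1"
    using len by simp
  then have "g b = g a"
    using per by simp
  then show False
    using inj ab \<open>b = a + 1\<close> by (auto dest: inj_onD)
qed

lemma frontier_circ_lift_points:
  assumes "x \<in> circ_lift ({a..a} \<union> {b..b})"
  shows "x \<in> frontier (circ_lift ({a..a} \<union> {b..b}))"
proof -
  have "countable ({a..a} \<union> {b..b})"
    by simp
  then have "interior (circ_lift ({a..a} \<union> {b..b})) = {}"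
    by (intro interior_countable_real countable_circ_lift)
  then show ?thesis
    using assms closure_subset unfolding frontier_def by blast
qed

lemma tnorm_le: "tnorm x \<le> \<bar>x - of_int k\<bar>"
  using infdist_le[of "of_int k" \<int> x] by (simp add: tnorm_def dist_real_def)

locale two_branches =
  fixes f f' f'' :: "real \<Rightarrow> real" and am bm ap bp d \<nu> :: real
  assumes branches: "am < bm" "bm - am < 1" "ap < bp" "bp - ap < 1"
    and disjoint: "\<forall>x\<in>{am<..<bm}. \<forall>y\<in>{ap<..<bp}. x - y \<notin> \<int>"
    and periodic: "\<forall>x. f (x + 1) = f x"
    and C2: "C2_on f f' f'' (circ_lift ({am..bm} \<union> {ap..bp}))"
    and decr: "\<forall>x\<in>{am..bm}. f' x \<le> 0" and incr: "\<forall>x\<in>{ap..bp}. 0 \<le> f' x"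
    and bound: "\<forall>x\<in>circ_lift ({am..bm} \<union> {ap..bp}). d \<le> \<bar>f' x\<bar> + \<bar>f'' x\<bar>"
    and nu: "0 < \<nu>" "\<nu> < d / 2"
    and boundary: "\<forall>x\<in>frontier (circ_lift ({am..bm} \<union> {ap..bp})). \<nu> \<le> \<bar>f' x\<bar>"
begin

abbreviation lift :: "real set" where
  "lift \<equiv> circ_lift ({am..bm} \<union> {ap..bp})"

lemma translates_subset_lift:
  "{am + of_int k..bm + of_int k} \<subseteq> lift" "{ap + of_int k..bp + of_int k} \<subseteq> lift"
  by (rule translate_subset_circ_lift; auto)+

lemma deriv_translate:
  assumes ab: "a < b" "{a..b} \<subseteq> {am..bm} \<union> {ap..bp}" and x: "x \<in> {a..b}"
  shows "f' (x + of_int k) = f' x"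
proof -
  have D1: "\<forall>x\<in>lift. (f has_real_derivative f' x) (at x within lift)"
    using C2 by (simp add: C2_on_def)
  have sub: "{a..b} \<subseteq> lift" "{a + of_int k..b + of_int k} \<subseteq> lift"
    using translate_subset_circ_lift[OF ab(2), of 0] translate_subset_circ_lift[OF ab(2), of k]
    by simp_all
  have "x + of_int k \<in> lift"
    using sub(2) x by auto
  then have "(f has_real_derivative f' (x + of_int k))
      (at ((\<lambda>y. y + of_int k) x) within (\<lambda>y. y + of_int k) ` {a..b})"
    using has_field_derivative_subset[OF D1[rule_format] sub(2)] by simp
  moreover have "((\<lambda>y. y + of_int k) has_real_derivative 1) (at x within {a..b})"
    by (auto intro!: derivative_eq_intros)
  ultimately have "(f \<circ> (\<lambda>y. y + of_int k) has_real_derivative f' (x + of_int k) * 1)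
      (at x within {a..b})"
    by (rule DERIV_image_chain)
  moreover have "f \<circ> (\<lambda>y. y + of_int k) = f"
    using periodic_of_int[OF periodic] by (auto simp: o_def)
  ultimately have "(f has_real_derivative f' (x + of_int k)) (at x within {a..b})"
    by simp
  moreover have "x \<in> lift"
    using sub(1) x by auto
  then have "(f has_real_derivative f' x) (at x within {a..b})"
    using has_field_derivative_subset[OF D1[rule_format] sub(1)] by simp
  ultimately show ?thesis
    using has_field_derivative_unique at_within_Icc_nontrivial[OF ab(1) x] by blast
qed

lemma decr_translate: "x \<in> {am + of_int k..bm + of_int k} \<Longrightarrow> f' x \<le> 0"
  using deriv_translate[OF branches(1), of "x - of_int k" k] decr by auto

lemma interior_if_flat:
  assumes "x \<in> lift" "\<bar>f' x\<bar> < \<nu>"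
  shows "x \<in> interior lift"
proof -
  have "x \<notin> frontier lift"
    using assms(2) boundary by (meson not_less)
  then show ?thesis
    using assms(1) closure_subset unfolding frontier_def by blast
qed

lemma flat_incr_convex:
  assumes \<theta>: "\<theta> \<in> {ap..bp}" "f' \<theta> < \<nu>" "0 < f'' \<theta>"
    and \<theta>': "\<theta>' \<in> {am..bm}" "f \<theta>' = f \<theta>"
  shows "\<exists>k::int. \<bar>\<theta> - \<theta>' - of_int k\<bar> < 7 * \<nu> / d"
proof -
  have C1: "C1_on f' f'' lift"
    using C2 by (simp add: C2_on_def)
  have band: "\<forall>x\<in>lift. \<bar>f' x\<bar> \<le> \<nu> \<longrightarrow> d - \<nu> \<le> \<bar>f'' x\<bar>"
  proof (intro ballI impI)
    fix x assume "x \<in> lift" "\<bar>f' x\<bar> \<le> \<nu>"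
    then show "d - \<nu> \<le> \<bar>f'' x\<bar>"
      using bound[rule_format, of x] by linarith
  qed
  have sub: "{ap..\<theta>} \<subseteq> lift"
    using translates_subset_lift(2)[of 0] \<theta>(1) by auto
  have "\<forall>x\<in>{ap..\<theta>}. f' x \<le> f' \<theta> \<and> d - \<nu> \<le> f'' x"
    by (rule band_rising_left[OF C1 sub _ _ \<theta>(2,3) band]) (use \<theta>(1) incr nu in auto)
  then have "f' ap \<le> f' \<theta>"
    using \<theta>(1) by auto
  moreover have "ap \<in> lift" "0 \<le> f' ap"
    using sub incr \<theta>(1) by auto
  ultimately have "ap \<in> interior lift"
    using interior_if_flat \<theta>(2) by simp
  then obtain k :: int where k: "ap = bm + of_int k"
    using interior_point_adjacent[OF branches(3,4) disjoint] by blast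
  have "{\<theta>' + of_int k..\<theta>} \<subseteq> {am + of_int k..bm + of_int k} \<union> {ap..\<theta>}"
    using k \<theta>' by auto
  then have "{\<theta>' + of_int k..\<theta>} \<subseteq> lift"
    using translates_subset_lift(1)[of k] sub by blast
  then have "\<theta> - (\<theta>' + of_int k) < 7 * \<nu> / d"
  proof (rule turning_point_distance[OF C2 _ _ _ _ _ bound \<theta>(2,3) nu])
    show "\<theta>' + of_int k \<le> ap" "ap \<le> \<theta>"
      using \<theta> \<theta>' k by auto
    show "\<forall>x\<in>{\<theta>' + of_int k..ap}. f' x \<le> 0"
      using decr_translate[of _ k] \<theta>' k by auto
    show "\<forall>x\<in>{ap..\<theta>}. 0 \<le> f' x"
      using incr \<theta> by auto
    show "f (\<theta>' + of_int k) = f \<theta>"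
      using periodic_of_int[OF periodic] \<theta>' by simp
  qed
  moreover have "\<theta>' + of_int k \<le> \<theta>"
    using \<theta> \<theta>' k by auto
  ultimately show ?thesis
    by (intro exI[of _ k]) auto
qed

lemma reflect:
  "two_branches (\<lambda>x. - f (- x)) (\<lambda>x. f' (- x)) (\<lambda>x. - f'' (- x)) (- bm) (- am) (- bp) (- ap) d \<nu>"
proof -
  have lift': "circ_lift ({- bm..- am} \<union> {- bp..- ap}) = uminus ` lift"
    using circ_lift_uminus[of "{am..bm} \<union> {ap..bp}"] by (simp add: image_Un)
  have disj': "x - y \<notin> \<int>" if "x \<in> {- bm<..<- am}" "y \<in> {- bp<..<- ap}" for x y
  proof
    assume "x - y \<in> \<int>"
    then have "- x - - y \<in> \<int>"
      using Ints_minus by fastforce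
    moreover have "- x \<in> {am<..<bm}" "- y \<in> {ap<..<bp}"
      using that by auto
    ultimately show False
      using disjoint by blast
  qed
  have per': "- f (- (x + 1)) = - f (- x)" for x
    using periodic[rule_format, of "- x - 1"] by simp
  show ?thesis
  proof unfold_locales
    show "- bm < - am" "- am - - bm < 1" "- bp < - ap" "- ap - - bp < 1"
      using branches by auto
    show "\<forall>x\<in>{- bm<..<- am}. \<forall>y\<in>{- bp<..<- ap}. x - y \<notin> \<int>"
      using disj' by blast
    show "\<forall>x. - f (- (x + 1)) = - f (- x)"
      using per' by blast
    show "C2_on (\<lambda>x. - f (- x)) (\<lambda>x. f' (- x)) (\<lambda>x. - f'' (- x))
        (circ_lift ({- bm..- am} \<union> {- bp..- ap}))"
      unfolding lift' using C2_on_uminus[OF C2_on_reflect[OF C2]] by simp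
    show "\<forall>x\<in>{- bm..- am}. f' (- x) \<le> 0" "\<forall>x\<in>{- bp..- ap}. 0 \<le> f' (- x)"
      using decr incr by auto
    show "\<forall>x\<in>circ_lift ({- bm..- am} \<union> {- bp..- ap}). d \<le> \<bar>f' (- x)\<bar> + \<bar>- f'' (- x)\<bar>"
      unfolding lift' using bound by auto
    show "0 < \<nu>" "\<nu> < d / 2"
      by (fact nu)+
    show "\<forall>x\<in>frontier (circ_lift ({- bm..- am} \<union> {- bp..- ap})). \<nu> \<le> \<bar>f' (- x)\<bar>"
      unfolding lift' frontier_uminus using boundary by auto
  qed
qed

lemma negate: "two_branches (\<lambda>x. - f x) (\<lambda>x. - f' x) (\<lambda>x. - f'' x) ap bp am bm d \<nu>"
proof -
  have disj': "x - y \<notin> \<int>" if "x \<in> {ap<..<bp}" "y \<in> {am<..<bm}" for x y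
  proof
    assume "x - y \<in> \<int>"
    then have "y - x \<in> \<int>"
      using Ints_minus by fastforce
    then show False
      using disjoint that by auto
  qed
  have lift': "circ_lift ({ap..bp} \<union> {am..bm}) = lift"
    by (simp add: Un_commute)
  show ?thesis
  proof unfold_locales
    show "ap < bp" "bp - ap < 1" "am < bm" "bm - am < 1"
      by (fact branches)+
    show "\<forall>x\<in>{ap<..<bp}. \<forall>y\<in>{am<..<bm}. x - y \<notin> \<int>"
      using disj' by blast
    show "\<forall>x. - f (x + 1) = - f x"
      using periodic by simp
    show "C2_on (\<lambda>x. - f x) (\<lambda>x. - f' x) (\<lambda>x. - f'' x) (circ_lift ({ap..bp} \<union> {am..bm}))"
      unfolding lift' by (rule C2_on_uminus[OF C2])
    show "\<forall>x\<in>{ap..bp}. - f' x \<le> 0" "\<forall>x\<in>{am..bm}. 0 \<le> - f' x"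
      using decr incr by auto
    show "\<forall>x\<in>circ_lift ({ap..bp} \<union> {am..bm}). d \<le> \<bar>- f' x\<bar> + \<bar>- f'' x\<bar>"
      unfolding lift' using bound by simp
    show "0 < \<nu>" "\<nu> < d / 2"
      by (fact nu)+
    show "\<forall>x\<in>frontier (circ_lift ({ap..bp} \<union> {am..bm})). \<nu> \<le> \<bar>- f' x\<bar>"
      unfolding lift' using boundary by simp
  qed
qed

lemma flat_incr:
  assumes \<theta>: "\<theta> \<in> {ap..bp}" "\<bar>f' \<theta>\<bar> < \<nu>" and \<theta>': "\<theta>' \<in> {am..bm}" "f \<theta>' = f \<theta>"
  shows "\<exists>k::int. \<bar>\<theta> - \<theta>' - of_int k\<bar> < 7 * \<nu> / d"
proof -
  have "\<theta> \<in> lift"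
    using translates_subset_lift(2)[of 0] \<theta>(1) by auto
  then have "f'' \<theta> \<noteq> 0"
    using bound \<theta>(2) nu by force
  then consider "0 < f'' \<theta>" | "f'' \<theta> < 0"
    by linarith
  then show ?thesis
  proof cases
    case 1
    then show ?thesis
      using flat_incr_convex \<theta> \<theta>' by simp
  next
    case 2
    interpret R: two_branches "\<lambda>x. - f (- x)" "\<lambda>x. f' (- x)" "\<lambda>x. - f'' (- x)"
      "- bm" "- am" "- bp" "- ap" d \<nu>
      by (rule reflect)
    obtain k :: int where "\<bar>- \<theta> - - \<theta>' - of_int k\<bar> < 7 * \<nu> / d"
      using R.flat_incr_convex[of "- \<theta>" "- \<theta>'"] \<theta> \<theta>' 2 by force
    then have "\<bar>\<theta> - \<theta>' - of_int (- k)\<bar> < 7 * \<nu> / d"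
      by (simp add: abs_minus_commute)
    then show ?thesis ..
  qed
qed

lemma flat_near:
  assumes \<theta>: "\<theta>m \<in> {am..bm}" "\<theta>p \<in> {ap..bp}" "f \<theta>m = f \<theta>p"
    and flat: "\<bar>f' \<theta>m\<bar> < \<nu> \<or> \<bar>f' \<theta>p\<bar> < \<nu>"
  shows "\<exists>k::int. \<bar>\<theta>p - \<theta>m - of_int k\<bar> < 7 * \<nu> / d"
proof (cases "\<bar>f' \<theta>p\<bar> < \<nu>")
  case True
  then show ?thesis
    using flat_incr \<theta> by simp
next
  case False
  interpret N: two_branches "\<lambda>x. - f x" "\<lambda>x. - f' x" "\<lambda>x. - f'' x" ap bp am bm d \<nu>
    by (rule negate)
  obtain k :: int where "\<bar>\<theta>m - \<theta>p - of_int k\<bar> < 7 * \<nu> / d"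
    using N.flat_incr[of \<theta>m \<theta>p] \<theta> flat False by auto
  then have "\<bar>\<theta>p - \<theta>m - of_int (- k)\<bar> < 7 * \<nu> / d"
    by simp
  then show ?thesis ..
qed

end


theorem lemma4p3:
  fixes f f' f'' :: "real \<Rightarrow> real"
    and am bm ap bp c e d D \<nu> Estar \<theta>m \<theta>p :: real
  assumes Im: "am \<le> bm" "bm - am \<le> 1"
    and Ip: "ap \<le> bp" "bp - ap \<le> 1"
    and disj: "\<forall>x\<in>{am<..<bm}. \<forall>y\<in>{ap<..<bp}. x - y \<notin> \<int>"
    and J: "c \<le> e"
    and per: "\<forall>x. f (x + 1) = f x"
    and d1: "\<forall>x\<in>circ_lift ({am..bm} \<union> {ap..bp}).
               (f has_real_derivative f' x) (at x within circ_lift ({am..bm} \<union> {ap..bp}))"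
    and d2: "\<forall>x\<in>circ_lift ({am..bm} \<union> {ap..bp}).
               (f' has_real_derivative f'' x) (at x within circ_lift ({am..bm} \<union> {ap..bp}))"
    and d2c: "continuous_on (circ_lift ({am..bm} \<union> {ap..bp})) f''"
    and mono_m: "\<forall>x\<in>{am..bm}. f' x \<le> 0"
    and mono_p: "\<forall>x\<in>{ap..bp}. f' x \<ge> 0"
    and dD: "0 < d" "d \<le> D"
    and bnd: "\<forall>x\<in>circ_lift ({am..bm} \<union> {ap..bp}). d \<le> \<bar>f' x\<bar> + \<bar>f'' x\<bar> \<and> \<bar>f' x\<bar> + \<bar>f'' x\<bar> \<le> D"
    and onto_m: "f ` {am..bm} = {c..e}"
    and onto_p: "f ` {ap..bp} = {c..e}"
    and nu: "0 < \<nu>" "\<nu> < d / 2"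
    and bdry: "\<forall>x\<in>frontier (circ_lift ({am..bm} \<union> {ap..bp})). \<nu> \<le> \<bar>f' x\<bar>"
    and E: "Estar \<in> {c..e}"
    and th: "\<theta>m \<in> {am..bm}" "\<theta>p \<in> {ap..bp}"
    and Eeq: "Estar = f \<theta>m" "Estar = f \<theta>p"
    and big: "tnorm (Tf f am bm ap bp Estar) \<ge> 7 * \<nu> / d"
  shows "\<bar>f' \<theta>m\<bar> \<ge> \<nu> \<and> \<bar>f' \<theta>p\<bar> \<ge> \<nu>"
proof -
  let ?S = "circ_lift ({am..bm} \<union> {ap..bp})"
  have C: "C2_on f f' f'' ?S"
    unfolding C2_on_def C1_on_def using d1 d2 d2c by blast
  have nondeg: "\<forall>x\<in>?S. 0 < \<bar>f' x\<bar> + \<bar>f'' x\<bar>"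
    using bnd dD by fastforce
  have sub: "{am..bm} \<subseteq> ?S" "{ap..bp} \<subseteq> ?S"
    using translate_subset_circ_lift[of _ _ "{am..bm} \<union> {ap..bp}" 0] by auto
  have inj: "inj_on f {am..bm}" "inj_on f {ap..bp}"
    using inj_on_if_deriv_sign[OF C sub(1) _ nondeg] inj_on_if_deriv_sign[OF C sub(2) _ nondeg]
      mono_m mono_p by blast+
  have Tf: "Tf f am bm ap bp Estar = \<theta>p - \<theta>m"
    unfolding Tf_def using the_inv_into_f_f[OF inj(2) th(2)] the_inv_into_f_f[OF inj(1) th(1)] Eeq
    by simp
  have degenerate: "am = bm \<longleftrightarrow> ap = bp"
    using degenerate_iff_of_inj_on[OF inj(1) Im(1) onto_m J]
      degenerate_iff_of_inj_on[OF inj(2) Ip(1) onto_p J] by simp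
  show ?thesis
  proof (cases "am = bm")
    case True
    then have "?S = circ_lift ({am..am} \<union> {ap..ap})"
      using degenerate by simp
    then have "\<theta>m \<in> frontier ?S" "\<theta>p \<in> frontier ?S"
      using frontier_circ_lift_points th sub by (metis subsetD)+
    then show ?thesis
      using bdry by blast
  next
    case False
    then interpret two_branches f f' f'' am bm ap bp d \<nu>
      using False degenerate Im Ip length_lt_one_if_inj_on_periodic[OF inj(1) Im(2) per Im(1)]
        length_lt_one_if_inj_on_periodic[OF inj(2) Ip(2) per Ip(1)]
        disj per C mono_m mono_p bnd nu bdry
      by unfold_locales auto
    show ?thesis
    proof (rule ccontr)
      assume "\<not> ?thesis"
      then obtain k :: int where "\<bar>\<theta>p - \<theta>m - of_int k\<bar> < 7 * \<nu> / d"
        using flat_near th Eeq by force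
      then show False
        using tnorm_le[of "\<theta>p - \<theta>m" k] big[unfolded Tf] by linarith
    qed
  qed
qed

end
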